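(* Let $A\in\mathbb{R}^{n\times d}$ have rows $\boldsymbol{a}_i^\top$, $\lambda>0$, let each $f_i$ be convex with conjugate $f_i^*$, and let $g$ be $\mu$-strongly convex and $L$-smooth. Let $\boldsymbol{x}^{(t)}$ with $\|\boldsymbol{x}^{(t)}\|_1\le\lambda$ and $\boldsymbol{y}^{(t)}\in\mathbb{R}^n$ be given, let $\bar{\boldsymbol{x}}^{(t)}=\arg\min_{\|\boldsymbol{x}\|_1\le\lambda}\mathcal{L}(\boldsymbol{x},\boldsymbol{y}^{(t)})$, let $s\ge\|\bar{\boldsymbol{x}}^{(t)}\|_0$ be an integer and $\eta=\frac{\mu}{2L}$, and define $\tilde{\boldsymbol{x}}\in\arg\min_{\|\boldsymbol{x}\|_1\le\lambda,\ \|\boldsymbol{x}\|_0\le s}\{\langle\frac1nA^\top\boldsymbol{y}^{(t)}+\nabla g(\boldsymbol{x}^{(t)}),\boldsymbol{x}\rangle+\frac L2\eta\|\boldsymbol{x}-\boldsymbol{x}^{(t)}\|^2\}$ and $\boldsymbol{x}^{(t+1)}=(1-\eta)\boldsymbol{x}^{(t)}+\eta\tilde{\boldsymbol{x}}$. Then $$\mathcal{L}(\boldsymbol{x}^{(t+1)},\boldsymbol{y}^{(t)})-\mathcal{L}(\bar{\boldsymbol{x}}^{(t)},\boldsymbol{y}^{(t)})\le\Big(1-\frac\eta2\Big)\Big(\mathcal{L}(\boldsymbol{x}^{(t)},\boldsymbol{y}^{(t)})-\mathcal{L}(\bar{\boldsymbol{x}}^{(t)},\boldsymbol{y}^{(t)})\Big),$$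 equivalently $(1-\frac\eta2)\big(\mathcal{L}(\boldsymbol{x}^{(t+1)},\boldsymbol{y}^{(t)})-\mathcal{L}(\boldsymbol{x}^{(t)},\boldsymbol{y}^{(t)})\big)\le-\frac\eta2\Delta_p^{(t)}$.
   Context: $\mathcal{L}(\boldsymbol{x},\boldsymbol{y})=g(\boldsymbol{x})+\frac1n\langle\boldsymbol{y},A\boldsymbol{x}\rangle-\frac1n\sum_{i=1}^nf_i^*(y_i)$. $\Delta_p^{(t)}=\mathcal{L}(\boldsymbol{x}^{(t+1)},\boldsymbol{y}^{(t)})-\mathcal{L}(\bar{\boldsymbol{x}}^{(t)},\boldsymbol{y}^{(t)})$. This is the primal step of the Primal-Dual Block Frank-Wolfe algorithm for the $\ell_1$ ball. *)

theory Defs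
  imports "HOL-Analysis.Analysis"
begin

definition conjugate :: "(real \<Rightarrow> real) \<Rightarrow> real \<Rightarrow> ereal" where
  "conjugate f y = (SUP x. ereal (x * y - f x))"

definition strongly_convex :: "real \<Rightarrow> ('a::real_normed_vector \<Rightarrow> real) \<Rightarrow> bool" where
  "strongly_convex mu g \<longleftrightarrow> (\<forall>x y t. 0 \<le> t \<and> t \<le> 1 \<longrightarrow>
      g (t *\<^sub>R x + (1 - t) *\<^sub>R y) \<le> t * g x + (1 - t) * g y - mu / 2 * t * (1 - t) * (norm (x - y))\<^sup>2)"

definition is_gradient :: "('a::real_inner \<Rightarrow> real) \<Rightarrow> ('a \<Rightarrow> 'a) \<Rightarrow> bool" where
  "is_gradient g G \<longleftrightarrow> (\<forall>x. (g has_derivative (\<lambda>h. G x \<bullet> h)) (at x))"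

definition smooth_with_gradient :: "real \<Rightarrow> ('a::real_inner \<Rightarrow> real) \<Rightarrow> ('a \<Rightarrow> 'a) \<Rightarrow> bool" where
  "smooth_with_gradient L g G \<longleftrightarrow> is_gradient g G \<and> (\<forall>x y. norm (G x - G y) \<le> L * norm (x - y))"

definition norm1 :: "real ^ 'd \<Rightarrow> real" where
  "norm1 x = (\<Sum>i\<in>UNIV. \<bar>x $ i\<bar>)"

definition norm0 :: "real ^ 'd \<Rightarrow> nat" where
  "norm0 x = card {i. x $ i \<noteq> 0}"

text \<open>The saddle function L(x,y) = g x + (1/n) <y, A x> - (1/n) sum_i f_i^*(y_i).
  The conjugate values are assumed finite where used.\<close>
definition lagr :: "(real ^ 'd \<Rightarrow> real) \<Rightarrow> ('n::finite \<Rightarrow> real \<Rightarrow> real) \<Rightarrow> real ^ 'd ^ 'n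
      \<Rightarrow> real ^ 'd \<Rightarrow> real ^ 'n \<Rightarrow> real" where
  "lagr g f A x y = g x + (1 / real CARD('n)) * (y \<bullet> (A *v x))
      - (1 / real CARD('n)) * (\<Sum>i\<in>UNIV. real_of_ereal (conjugate (f i) (y $ i)))"

end

theory Submission
  imports Defs
begin

(* With c = (1/n) A^T y and P x = g x + <c, x>, the saddle function is P minus a term constant in x.
   L-smoothness bounds P at the new iterate by the proximal model minimised by xtil; since
   L eta <= mu, the model at xbar is dominated by the strong-convexity lower bound of g around xt,
   giving P xnew - P xbar <= (1 - eta) (P xt - P xbar), and the gap is nonnegative by optimality
   of xbar. The conjugate terms cancel. *)

lemma has_real_derivative_along_line:
  fixes g :: "'a::real_inner \<Rightarrow> real"
  assumes "is_gradient g G"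
  shows "((\<lambda>t. g (x + t *\<^sub>R d)) has_real_derivative (G (x + t *\<^sub>R d) \<bullet> d)) (at t)"
proof -
  have outer: "(g has_derivative (\<lambda>h. G (x + t *\<^sub>R d) \<bullet> h)) (at (x + t *\<^sub>R d))"
    using assms unfolding is_gradient_def by blast
  have inner: "((\<lambda>t. x + t *\<^sub>R d) has_derivative (\<lambda>s. s *\<^sub>R d)) (at t)"
    by (auto intro!: derivative_eq_intros)
  show ?thesis
    using has_derivative_compose[OF inner outer]
    unfolding has_field_derivative_def by (simp add: mult_commute_abs)
qed

lemma smooth_upper_quadratic_bound:
  fixes g :: "'a::real_inner \<Rightarrow> real"
  assumes "smooth_with_gradient L g G"
  shows "g y \<le> g x + G x \<bullet> (y - x) + L / 2 * (norm (y - x))\<^sup>2"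
proof -
  define d where "d = y - x"
  define \<phi> where "\<phi> s = g (x + s *\<^sub>R d) - s * (G x \<bullet> d) - L * s\<^sup>2 / 2 * (norm d)\<^sup>2" for s
  have grad: "is_gradient g G" and lip: "\<And>a b. norm (G a - G b) \<le> L * norm (a - b)"
    using assms unfolding smooth_with_gradient_def by auto
  have "\<phi> 1 \<le> \<phi> 0"
  proof (rule DERIV_nonpos_imp_nonincreasing[of 0 1])
    fix s :: real assume s: "0 \<le> s" "s \<le> 1"
    have "(G (x + s *\<^sub>R d) - G x) \<bullet> d \<le> norm (G (x + s *\<^sub>R d) - G x) * norm d"
      by (rule norm_cauchy_schwarz)
    also have "\<dots> \<le> L * norm (s *\<^sub>R d) * norm d"
      using lip[of "x + s *\<^sub>R d" x] by (simp add: mult_right_mono)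
    also have "\<dots> = L * s * (norm d)\<^sup>2"
      using s by (simp add: power2_eq_square)
    finally have "G (x + s *\<^sub>R d) \<bullet> d - G x \<bullet> d - L * s * (norm d)\<^sup>2 \<le> 0"
      by (simp add: inner_diff_left)
    moreover have "(\<phi> has_real_derivative G (x + s *\<^sub>R d) \<bullet> d - G x \<bullet> d - L * s * (norm d)\<^sup>2) (at s)"
      unfolding \<phi>_def by (auto intro!: derivative_eq_intros has_real_derivative_along_line[OF grad])
    ultimately show "\<exists>y. (\<phi> has_real_derivative y) (at s) \<and> y \<le> 0"
      by blast
  qed simp
  then show ?thesis
    by (simp add: \<phi>_def d_def)
qed

lemma smooth_with_gradient_uminus:
  "smooth_with_gradient L g G \<Longrightarrow> smooth_with_gradient L (\<lambda>x. - g x) (\<lambda>x. - G x)"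
  unfolding smooth_with_gradient_def is_gradient_def
  by (auto intro!: derivative_eq_intros simp: norm_minus_commute)

lemma smooth_lower_quadratic_bound:
  fixes g :: "'a::real_inner \<Rightarrow> real"
  assumes "smooth_with_gradient L g G"
  shows "g x + G x \<bullet> (y - x) - L / 2 * (norm (y - x))\<^sup>2 \<le> g y"
  using smooth_upper_quadratic_bound[OF smooth_with_gradient_uminus[OF assms], of y x] by simp

lemma le_if_sub_mult_le:
  fixes a b c :: real
  assumes "\<And>t. 0 < t \<Longrightarrow> t \<le> 1 \<Longrightarrow> a - t * b \<le> c"
  shows "a \<le> c"
proof (rule tendsto_upperbound)
  show "((\<lambda>t. a - t * b) \<longlongrightarrow> a) (at_right 0)"
    by (auto intro!: tendsto_eq_intros)
  show "\<forall>\<^sub>F t in at_right 0. a - t * b \<le> c"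
    by (rule eventually_mono[OF eventually_at_right_real[of 0 1]]) (use assms in auto)
qed simp

lemma strongly_convex_gradient_lower_bound:
  fixes g :: "'a::real_inner \<Rightarrow> real"
  assumes smooth: "smooth_with_gradient L g G" and sc: "strongly_convex mu g"
  shows "g x + G x \<bullet> (y - x) + mu / 2 * (norm (y - x))\<^sup>2 \<le> g y"
proof -
  define d where "d = y - x"
  have "G x \<bullet> d + mu / 2 * (norm d)\<^sup>2 \<le> g y - g x"
  proof (rule le_if_sub_mult_le[where b = "(L + mu) / 2 * (norm d)\<^sup>2"])
    fix t :: real assume t: "0 < t" "t \<le> 1"
    have "x + t *\<^sub>R d = t *\<^sub>R y + (1 - t) *\<^sub>R x"
      by (simp add: d_def algebra_simps)
    then have upper: "g (x + t *\<^sub>R d) \<le> t * g y + (1 - t) * g x - mu / 2 * t * (1 - t) * (norm d)\<^sup>2"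
      using sc t unfolding strongly_convex_def d_def by (metis less_eq_real_def)
    have lower: "g x + t * (G x \<bullet> d) - L / 2 * t\<^sup>2 * (norm d)\<^sup>2 \<le> g (x + t *\<^sub>R d)"
      using smooth_lower_quadratic_bound[OF smooth, of x "x + t *\<^sub>R d"] t
      by (simp add: power_mult_distrib)
    have "t * (G x \<bullet> d + mu / 2 * (norm d)\<^sup>2 - t * ((L + mu) / 2 * (norm d)\<^sup>2)) \<le> t * (g y - g x)"
      using upper lower by (simp add: field_simps power2_eq_square)
    then show "G x \<bullet> d + mu / 2 * (norm d)\<^sup>2 - t * ((L + mu) / 2 * (norm d)\<^sup>2) \<le> g y - g x"
      using t by simp
  qed
  then show ?thesis
    by (simp add: d_def)
qed

lemma proximal_gradient_step_contraction:
  fixes g :: "'a::real_inner \<Rightarrow> real"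
  assumes smooth: "smooth_with_gradient L g G" and sc: "strongly_convex mu g"
    and eta: "0 \<le> eta" "L * eta \<le> mu"
    and model_le: "(c + G x) \<bullet> x' + L / 2 * eta * (norm (x' - x))\<^sup>2
      \<le> (c + G x) \<bullet> z + L / 2 * eta * (norm (z - x))\<^sup>2"
  shows "g (x + eta *\<^sub>R (x' - x)) + c \<bullet> (x + eta *\<^sub>R (x' - x)) - (g z + c \<bullet> z)
    \<le> (1 - eta) * (g x + c \<bullet> x - (g z + c \<bullet> z))"
proof -
  define P where "P u = g u + c \<bullet> u" for u
  define d where "d = x' - x"
  define e where "e = z - x"
  have model_le': "(c + G x) \<bullet> d + L / 2 * eta * (norm d)\<^sup>2 \<le> (c + G x) \<bullet> e + mu / 2 * (norm e)\<^sup>2"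
  proof -
    have "L / 2 * eta * (norm e)\<^sup>2 \<le> mu / 2 * (norm e)\<^sup>2"
      using eta(2) by (intro mult_right_mono) auto
    then show ?thesis
      using model_le by (simp add: d_def e_def inner_diff_right)
  qed
  have "P (x + eta *\<^sub>R d) \<le> P x + eta * ((c + G x) \<bullet> d + L / 2 * eta * (norm d)\<^sup>2)"
    using smooth_upper_quadratic_bound[OF smooth, of "x + eta *\<^sub>R d" x] eta(1)
    by (simp add: P_def power_mult_distrib inner_add_left inner_add_right algebra_simps power2_eq_square)
  also have "\<dots> \<le> P x + eta * ((c + G x) \<bullet> e + mu / 2 * (norm e)\<^sup>2)"
    using model_le' eta(1) by (simp add: mult_left_mono)
  also have "\<dots> \<le> P x + eta * (P z - P x)"
    using strongly_convex_gradient_lower_bound[OF smooth sc, of x z] eta(1)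
    by (intro add_left_mono mult_left_mono) (simp_all add: P_def e_def inner_add_left inner_diff_right)
  finally show ?thesis
    by (simp add: P_def d_def algebra_simps)
qed

lemma lagr_eq_inner_transpose:
  fixes A :: "real ^ 'd ^ 'n::finite"
  shows "lagr g f A x y = g x + ((1 / real CARD('n)) *\<^sub>R (transpose A *v y)) \<bullet> x
    - (1 / real CARD('n)) * (\<Sum>i\<in>UNIV. real_of_ereal (conjugate (f i) (y $ i)))"
  unfolding lagr_def by (simp add: dot_lmul_matrix)

theorem lemma1:
  fixes A :: "real ^ 'd ^ 'n"
    and f :: "'n \<Rightarrow> real \<Rightarrow> real"
    and g :: "real ^ 'd \<Rightarrow> real"
    and G :: "real ^ 'd \<Rightarrow> real ^ 'd"
    and lam mu L :: real
    and s :: nat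
    and xt xbar xtil :: "real ^ 'd"
    and yt :: "real ^ 'n"
  assumes lam_pos: "lam > 0"
    and f_convex: "\<And>i. convex_on UNIV (f i)"
    and fstar_finite: "\<And>i. conjugate (f i) (yt $ i) < \<infinity>"
    and mu_pos: "mu > 0"
    and g_sc: "strongly_convex mu g"
    and L_pos: "L > 0"
    and g_smooth: "smooth_with_gradient L g G"
    and xt_feas: "norm1 xt \<le> lam"
    and xbar_feas: "norm1 xbar \<le> lam"
    and xbar_min: "\<And>x. norm1 x \<le> lam \<Longrightarrow> lagr g f A xbar yt \<le> lagr g f A x yt"
    and s_ge: "s \<ge> norm0 xbar"
    and xtil_feas: "norm1 xtil \<le> lam" "norm0 xtil \<le> s"
    and xtil_min: "\<And>x. norm1 x \<le> lam \<Longrightarrow> norm0 x \<le> s \<Longrightarrow>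
        ((1 / real CARD('n)) *\<^sub>R (transpose A *v yt) + G xt) \<bullet> xtil
          + L / 2 * (mu / (2 * L)) * (norm (xtil - xt))\<^sup>2
        \<le> ((1 / real CARD('n)) *\<^sub>R (transpose A *v yt) + G xt) \<bullet> x
          + L / 2 * (mu / (2 * L)) * (norm (x - xt))\<^sup>2"
  shows "lagr g f A ((1 - mu / (2 * L)) *\<^sub>R xt + (mu / (2 * L)) *\<^sub>R xtil) yt - lagr g f A xbar yt
         \<le> (1 - (mu / (2 * L)) / 2) * (lagr g f A xt yt - lagr g f A xbar yt)"
proof -
  define eta where "eta = mu / (2 * L)"
  define c where "c = (1 / real CARD('n)) *\<^sub>R (transpose A *v yt)"
  define P where "P x = g x + c \<bullet> x" for x
  have lagr_P: "lagr g f A x yt - lagr g f A z yt = P x - P z" for x z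
    by (simp add: lagr_eq_inner_transpose P_def c_def)
  have eta: "0 \<le> eta" "L * eta \<le> mu"
    using mu_pos L_pos by (simp_all add: eta_def)
  have "P (xt + eta *\<^sub>R (xtil - xt)) - P xbar \<le> (1 - eta) * (P xt - P xbar)"
    unfolding P_def using xtil_min[OF xbar_feas] s_ge
    by (intro proximal_gradient_step_contraction[OF g_smooth g_sc eta]) (simp add: c_def eta_def)
  also have "\<dots> \<le> (1 - eta / 2) * (P xt - P xbar)"
    using xbar_min[OF xt_feas] lagr_P[of xbar xt] eta(1) by (intro mult_right_mono) auto
  finally show ?thesis
    unfolding eta_def[symmetric] lagr_P by (simp add: algebra_simps)
qed

end
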